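(* Let $m\in\mathbb{N}$ be odd and write $m=2k+1$. Then the friendship graph $F_{\lfloor m/2\rfloor}=F_k$ is $\mathbb{Z}_m$-cordial.
   Context: Graphs are finite, simple and undirected. For $n\in\mathbb{N}$, the friendship graph $F_n$ is the union of $n$ copies of the triangle $C_3$ joined at a single common (central) vertex. For an abelian group $A$ and a graph $G=(V,E)$, a vertex labeling $\ell:V\to A$ induces an edge labeling $\ell(\{v_1,v_2\})=\ell(v_1)+\ell(v_2)$. Let $f_V(a)=|\{v\in V:\ell(v)=a\}|$ and $f_E(a)=|\{e\in E:\ell(e)=a\}|$. The labeling is $A$-cordial if $|f_V(a_1)-f_V(a_2)|\le 1$ and $|f_E(a_1)-f_E(a_2)|\le 1$ for all $a_1,a_2\in A$; $G$ is $A$-cordial if it admits an $A$-cordial labeling. *)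

theory Defs
  imports Main
begin

definition simple_graph :: "'a set \<Rightarrow> 'a set set \<Rightarrow> bool" where
  "simple_graph V E \<longleftrightarrow> finite V \<and> (\<forall>e\<in>E. e \<subseteq> V \<and> card e = 2)"

definition friendship_vertices :: "nat \<Rightarrow> nat set" where
  "friendship_vertices n = {0..2*n}"

definition friendship_edges :: "nat \<Rightarrow> nat set set" where
  "friendship_edges n =
     {{0, j} | j. j \<in> {1..2*n}} \<union> {{2*i - 1, 2*i} | i. i \<in> {1..n}}"

text \<open>The cyclic group Z_m is represented by the residues {0..<m} with
  addition modulo m. A vertex labeling l induces the edge label
  l(v1) + l(v2) mod m on the edge {v1,v2}.\<close>

definition edge_label :: "nat \<Rightarrow> ('a \<Rightarrow> nat) \<Rightarrow> 'a set \<Rightarrow> nat" where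
  "edge_label m l e = (\<Sum>v\<in>e. l v) mod m"

definition vcount :: "'a set \<Rightarrow> ('a \<Rightarrow> nat) \<Rightarrow> nat \<Rightarrow> nat" where
  "vcount V l a = card {v \<in> V. l v = a}"

definition ecount :: "nat \<Rightarrow> 'a set set \<Rightarrow> ('a \<Rightarrow> nat) \<Rightarrow> nat \<Rightarrow> nat" where
  "ecount m E l a = card {e \<in> E. edge_label m l e = a}"

definition Zm_cordial_labeling :: "nat \<Rightarrow> 'a set \<Rightarrow> 'a set set \<Rightarrow> ('a \<Rightarrow> nat) \<Rightarrow> bool" where
  "Zm_cordial_labeling m V E l \<longleftrightarrow>
     (\<forall>v\<in>V. l v < m) \<and>
     (\<forall>a1<m. \<forall>a2<m. vcount V l a1 \<le> vcount V l a2 + 1) \<and>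
     (\<forall>a1<m. \<forall>a2<m. ecount m E l a1 \<le> ecount m E l a2 + 1)"

definition Zm_cordial :: "nat \<Rightarrow> 'a set \<Rightarrow> 'a set set \<Rightarrow> bool" where
  "Zm_cordial m V E \<longleftrightarrow> (\<exists>l. Zm_cordial_labeling m V E l)"

end

theory Submission imports Defs begin

(* Label the centre 0 and the outer vertices bijectively by 1, ..., 2k. Every vertex label then
   occurs once and the 2k spokes carry every nonzero label once, so the labeling is cordial as
   soon as the k rim edges {2i-1, 2i} carry 0 once or twice and every nonzero label at most once.
   For odd k the identity does this: rim edge i gets 4i - 1, which is injective modulo 2k + 1 and
   vanishes only at i = (k + 1)/2. For even k it never vanishes, so the labels of vertices 2 and 2k
   are swapped: the first and the last rim edge then sum to 2k + 1, the others keep 4i - 1. *)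

definition rim_label :: "nat \<Rightarrow> (nat \<Rightarrow> nat) \<Rightarrow> nat \<Rightarrow> nat" where
  "rim_label m l i = (l (2*i - 1) + l (2*i)) mod m"

lemma friendship_edges_eq:
  "friendship_edges k = (\<lambda>j. {0, j}) ` {1..2*k} \<union> (\<lambda>i. {2*i - 1, 2*i}) ` {1..k}"
  unfolding friendship_edges_def by auto

lemma card_filter_image:
  assumes "inj_on f A"
  shows "card {y \<in> f ` A. P y} = card {x \<in> A. P (f x)}"
proof -
  have "{y \<in> f ` A. P y} = f ` {x \<in> A. P (f x)}" by auto
  moreover have "inj_on f {x \<in> A. P (f x)}" using assms by (rule inj_on_subset) auto
  ultimately show ?thesis by (simp add: card_image)
qed

lemma card_fiber_bij_betw:
  assumes "bij_betw f A B"
  shows "card {x \<in> A. f x = b} = (if b \<in> B then 1 else 0)"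
proof (cases "b \<in> B")
  case True
  then obtain x where "x \<in> A" "f x = b" using assms by (auto simp: bij_betw_def)
  then have "{x \<in> A. f x = b} = {x}" using assms by (auto simp: bij_betw_def inj_on_def)
  then show ?thesis using True by simp
next
  case False
  then have "{x \<in> A. f x = b} = {}" using assms by (auto simp: bij_betw_def)
  then show ?thesis using False by (metis card.empty)
qed

lemma card_fiber_le_1_if_inj_on:
  assumes "inj_on f A"
  shows "card {x \<in> A. f x = b} \<le> 1"
  using assms by (cases "finite {x \<in> A. f x = b}") (auto simp: card_le_Suc0_iff_eq inj_on_def)

lemma ecount_friendship_edges:
  "ecount m (friendship_edges k) l a =
     card {j \<in> {1..2*k}. (l 0 + l j) mod m = a} + card {i \<in> {1..k}. rim_label m l i = a}"
proof -
  let ?spokes = "(\<lambda>j. {0, j}) ` {1..2*k}" and ?rims = "(\<lambda>i. {2*i - 1, 2*i}) ` {1..k}"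
  have "inj_on (\<lambda>j. {0::nat, j}) {1..2*k}" by (auto simp: inj_on_def doubleton_eq_iff)
  then have spokes:
      "card {e \<in> ?spokes. edge_label m l e = a} = card {j \<in> {1..2*k}. (l 0 + l j) mod m = a}"
    by (simp add: card_filter_image edge_label_def cong: conj_cong)
  have "edge_label m l {2*i - 1, 2*i} = rim_label m l i" if "1 \<le> i" for i
    using that by (simp add: edge_label_def rim_label_def)
  moreover have "inj_on (\<lambda>i. {2*i - 1, 2*i::nat}) {1..k}"
    by (auto simp: inj_on_def doubleton_eq_iff)
  ultimately have rims:
      "card {e \<in> ?rims. edge_label m l e = a} = card {i \<in> {1..k}. rim_label m l i = a}"
    by (simp add: card_filter_image cong: conj_cong)
  have "?spokes \<inter> ?rims = {}" by (auto simp: doubleton_eq_iff)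
  then have "ecount m (friendship_edges k) l a =
      card {e \<in> ?spokes. edge_label m l e = a} + card {e \<in> ?rims. edge_label m l e = a}"
    unfolding ecount_def friendship_edges_eq
    by (subst card_Un_disjoint[symmetric]) (auto intro!: arg_cong[where f = card])
  then show ?thesis using spokes rims by simp
qed

lemma Zm_cordial_labeling_friendship:
  assumes m: "m = 2*k + 1" and center: "l 0 = 0" and bij: "bij_betw l {1..2*k} {1..2*k}"
    and rim_zero: "card {i \<in> {1..k}. rim_label m l i = 0} \<in> {1, 2}"
    and rim_nonzero_inj: "inj_on (rim_label m l) {i \<in> {1..k}. rim_label m l i \<noteq> 0}"
  shows "Zm_cordial_labeling m {0..2*k} (friendship_edges k) l"
proof -
  have "bij_betw l ({1..2*k} \<union> {0}) ({1..2*k} \<union> {l 0})"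
    using bij center by (intro notIn_Un_bij_betw) auto
  moreover have "{1..2*k} \<union> {0} = {0..2*k}" and "{1..2*k} \<union> {l 0} = {0..<m}"
    using m center by auto
  ultimately have bij_all: "bij_betw l {0..2*k} {0..<m}" by simp
  then have labels_lt: "\<forall>v\<in>{0..2*k}. l v < m" by (auto simp: bij_betw_def)
  have vcount: "vcount {0..2*k} l a = 1" if "a < m" for a
    using card_fiber_bij_betw[OF bij_all] that by (simp add: vcount_def)
  have spokes:
      "card {j \<in> {1..2*k}. (l 0 + l j) mod m = a} = (if a \<in> {1..2*k} then 1 else 0)" for a
  proof -
    have "(l 0 + l j) mod m = l j" if "j \<in> {1..2*k}" for j
      using that labels_lt center by simp
    then show ?thesis using card_fiber_bij_betw[OF bij] by (simp cong: conj_cong)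
  qed
  have rims: "card {i \<in> {1..k}. rim_label m l i = a} \<le> 1" if "a \<noteq> 0" for a
  proof -
    have "{i \<in> {1..k}. rim_label m l i = a} =
        {i \<in> {i \<in> {1..k}. rim_label m l i \<noteq> 0}. rim_label m l i = a}"
      using that by auto
    then show ?thesis using card_fiber_le_1_if_inj_on[OF rim_nonzero_inj] by simp
  qed
  have ecount: "1 \<le> ecount m (friendship_edges k) l a \<and> ecount m (friendship_edges k) l a \<le> 2"
    if "a < m" for a
  proof -
    have "ecount m (friendship_edges k) l a =
        (if a \<in> {1..2*k} then 1 else 0) + card {i \<in> {1..k}. rim_label m l i = a}"
      by (simp only: ecount_friendship_edges spokes)
    then show ?thesis using rims[of a] rim_zero that m by (cases "a = 0") auto
  qed
  show ?thesis
    unfolding Zm_cordial_labeling_def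
  proof (intro conjI allI impI)
    fix a1 a2 assume "a1 < m" "a2 < m"
    then show "vcount {0..2*k} l a1 \<le> vcount {0..2*k} l a2 + 1"
      using vcount by simp
    from \<open>a1 < m\<close> \<open>a2 < m\<close>
    show "ecount m (friendship_edges k) l a1 \<le> ecount m (friendship_edges k) l a2 + 1"
      using ecount[of a1] ecount[of a2] by linarith
  qed (rule labels_lt)
qed

lemma inj_on_mult_minus_one_mod:
  fixes c m k :: nat
  assumes "coprime m c" and "k \<le> m"
  shows "inj_on (\<lambda>i. (c*i - 1) mod m) {1..k}"
proof (rule linorder_inj_onI')
  fix i j assume "i \<in> {1..k}" "j \<in> {1..k}" "i < j"
  show "(c*i - 1) mod m \<noteq> (c*j - 1) mod m"
  proof
    assume "(c*i - 1) mod m = (c*j - 1) mod m"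
    moreover have "c*i - 1 \<le> c*j - 1" using \<open>i < j\<close> by (simp add: diff_le_mono)
    ultimately have "m dvd (c*j - 1) - (c*i - 1)" by (metis mod_eq_dvd_iff_nat)
    moreover have "(c*j - 1) - (c*i - 1) = c*(j - i)"
      using \<open>i \<in> {1..k}\<close> \<open>i < j\<close> by (cases "c = 0") (auto simp: diff_mult_distrib2)
    ultimately have "m dvd j - i" using assms(1) by (metis coprime_dvd_mult_right_iff)
    moreover have "0 < j - i" "j - i < m"
      using \<open>i \<in> {1..k}\<close> \<open>j \<in> {1..k}\<close> \<open>i < j\<close> assms(2) by auto
    ultimately show False by (meson dvd_imp_le not_le)
  qed
qed

lemma four_mult_minus_one_mod_eq_0_iff:
  fixes m k i :: nat
  assumes m: "m = 2*k + 1" and i: "1 \<le> i" "i \<le> k"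
  shows "(4*i - 1) mod m = 0 \<longleftrightarrow> 2*i = k + 1"
proof -
  have "0 < 4*i - 1" "4*i - 1 < 2*m" using m i by linarith+
  then have "(4*i - 1) mod m = 0 \<longleftrightarrow> 4*i - 1 = m"
    by (cases "4*i - 1 < m") (auto simp: le_mod_geq)
  also have "\<dots> \<longleftrightarrow> 2*i = k + 1" using m i by arith
  finally show ?thesis .
qed

lemma rim_label_id: "1 \<le> i \<Longrightarrow> rim_label m id i = (4*i - 1) mod m"
  by (simp add: rim_label_def)

lemma inj_on_rim_label_id:
  assumes "m = 2*k + 1"
  shows "inj_on (rim_label m id) {1..k}"
proof -
  have "coprime m (4::nat)" using assms coprime_power_right_iff[of m 2 2] by simp
  then have "inj_on (\<lambda>i. (4*i - 1) mod m) {1..k}"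
    using assms by (intro inj_on_mult_minus_one_mod) auto
  then show ?thesis
    using inj_on_cong[of "{1..k}" "rim_label m id" "\<lambda>i. (4*i - 1) mod m"]
    by (simp add: rim_label_id)
qed

lemma Zm_cordial_labeling_friendship_odd:
  assumes m: "m = 2*k + 1" and "odd k"
  shows "Zm_cordial_labeling m {0..2*k} (friendship_edges k) id"
proof (rule Zm_cordial_labeling_friendship[OF m])
  obtain c where c: "k = 2*c + 1" using \<open>odd k\<close> oddE by blast
  have "rim_label m id i = 0 \<longleftrightarrow> i = c + 1" if "i \<in> {1..k}" for i
    using that four_mult_minus_one_mod_eq_0_iff[OF m, of i] c by (auto simp: rim_label_id)
  then have "{i \<in> {1..k}. rim_label m id i = 0} = {c + 1}" using c by auto
  then show "card {i \<in> {1..k}. rim_label m id i = 0} \<in> {1, 2}" by simp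
  show "inj_on (rim_label m id) {i \<in> {1..k}. rim_label m id i \<noteq> 0}"
    using inj_on_rim_label_id[OF m] by (rule inj_on_subset) auto
qed simp_all

lemma Zm_cordial_labeling_friendship_even:
  assumes m: "m = 2*k + 1" and "even k" and "2 \<le> k"
  shows "Zm_cordial_labeling m {0..2*k} (friendship_edges k) (id(2 := 2*k, 2*k := 2))"
    (is "Zm_cordial_labeling _ _ _ ?l")
proof (rule Zm_cordial_labeling_friendship[OF m])
  show "?l 0 = 0" using assms by simp
  show "bij_betw ?l {1..2*k} {1..2*k}"
    using assms by (intro bij_betw_byWitness[where f' = ?l]) auto
  have rim_inner: "rim_label m ?l i = rim_label m id i" if "1 < i" "i < k" for i
    using that by (simp add: rim_label_def)
  have rim_nonzero: "rim_label m ?l i \<noteq> 0" if "1 < i" "i < k" for i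
  proof -
    have "2*i \<noteq> k + 1" using \<open>even k\<close> by presburger
    then show ?thesis
      using that rim_inner four_mult_minus_one_mod_eq_0_iff[OF m, of i] by (simp add: rim_label_id)
  qed
  have "2*k - 1 \<noteq> 2" using \<open>even k\<close> by presburger
  then have rim_ends: "rim_label m ?l 1 = 0" "rim_label m ?l k = 0"
    using assms by (simp_all add: rim_label_def)
  have nonzero_inner: "1 < i \<and> i < k" if "i \<in> {1..k}" "rim_label m ?l i \<noteq> 0" for i
  proof -
    have "i \<noteq> 1" "i \<noteq> k" using that(2) rim_ends by auto
    then show ?thesis using that(1) by simp
  qed
  have "{i \<in> {1..k}. rim_label m ?l i = 0} = {1, k}"
  proof (intro equalityI subsetI)
    fix i assume "i \<in> {i \<in> {1..k}. rim_label m ?l i = 0}"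
    then have "1 \<le> i" "i \<le> k" "rim_label m ?l i = 0" by auto
    then show "i \<in> {1, k}" using rim_nonzero[of i] by (metis insert_iff le_neq_implies_less)
  qed (use rim_ends \<open>2 \<le> k\<close> in auto)
  then show "card {i \<in> {1..k}. rim_label m ?l i = 0} \<in> {1, 2}" using \<open>2 \<le> k\<close> by simp
  have "inj_on (rim_label m id) {1<..<k}"
    using inj_on_rim_label_id[OF m] by (rule inj_on_subset) auto
  then have "inj_on (rim_label m ?l) {1<..<k}"
    using inj_on_cong[of "{1<..<k}" "rim_label m ?l" "rim_label m id"] rim_inner by simp
  moreover have "{i \<in> {1..k}. rim_label m ?l i \<noteq> 0} \<subseteq> {1<..<k}"
    using nonzero_inner by auto
  ultimately show "inj_on (rim_label m ?l) {i \<in> {1..k}. rim_label m ?l i \<noteq> 0}"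
    by (rule inj_on_subset)
qed

theorem theorem11p1:
  fixes m k :: nat
  assumes "odd m" and "m = 2 * k + 1"
  shows "Zm_cordial m (friendship_vertices (m div 2)) (friendship_edges (m div 2))"
proof -
  have "\<exists>l. Zm_cordial_labeling m {0..2*k} (friendship_edges k) l"
  proof (cases "k = 0")
    case True
    then have "Zm_cordial_labeling m {0..2*k} (friendship_edges k) id"
      using assms(2) by (simp add: Zm_cordial_labeling_def friendship_edges_eq vcount_def ecount_def)
    then show ?thesis by blast
  next
    case False
    then have "even k \<Longrightarrow> 2 \<le> k" by presburger
    then show ?thesis
      using Zm_cordial_labeling_friendship_odd[OF assms(2)]
        Zm_cordial_labeling_friendship_even[OF assms(2)] by blast
  qed
  moreover have "m div 2 = k" using assms(2) by simp
  ultimately show ?thesis by (simp add: Zm_cordial_def friendship_vertices_def)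
qed

end
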